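(* Assume the cost function $\mathbf{c}$ satisfies the Principle of Near-Optimality (PONO). Let $Q$ be a finite nonempty set of tables, let $\alpha_i\ge 1$, and run the Representative-Tradeoffs dynamic program (RTA) with internal precision $\alpha_i$, producing sets $\mathcal{P}^q\subseteq \mathcal{A}(q)$ for all nonempty $q\subseteq Q$ (the order in which splits, operators and sub-plans are enumerated is arbitrary). Then for every nonempty $q\subseteq Q$ and every plan $p^*\in\mathcal{A}(q)$ there exists $p\in\mathcal{P}^q$ with $\mathbf{c}(p)\preceq_{\alpha_i^{|q|}}\mathbf{c}(p^* )$. In particular $\mathcal{P}^Q$ is an $\alpha_i^{|Q|}$-approximate Pareto set for $Q$.
   Context: Fix a finite set $\mathbb{O}$ of $l\ge1$ objectives and a finite set $\mathbb{J}$ of join operators. For each table $t$ there is a finite nonempty set $\mathcal{A}(\{t\})$ of scan plans (access paths). For a set $q$ of tables with $|q|\ge2$, the plan space $\mathcal{A}(q)$ consists of all plans $\mathrm{Combine}(j,p_1,p_2)$ where $q=q_1\dot\cup q_2$ with $q_1,q_2$ nonempty, $j\in\mathbb{J}$, $p_1\in\mathcal{A}(q_1)$, $p_2\in\mathcal{A}(q_2)$; $p_1,p_2$ are the sub-plans. Each plan $p$ has a cost vector $\mathbf{c}(p)\in\mathbb{R}_{\ge0}^{\mathbb{O}}$. For vectors, $\mathbf{c}_1\preceq\mathbf{c}_2$ means $\mathbf{c}_1^o\le\mathbf{c}_2^o$ for all $o\in\mathbb{O}$, and $\mathbf{c}_1\preceq_\alpha\mathbf{c}_2$ means $\mathbf{c}_1^o\le\alpha\,\mathbf{c}_2^o$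 for all $o$. PONO: for all $\alpha\ge1$, $j\in\mathbb{J}$ and plans with $\mathbf{c}(p_L^* )\preceq_\alpha\mathbf{c}(p_L)$, $\mathbf{c}(p_R^* )\preceq_\alpha\mathbf{c}(p_R)$ (where $p_L,p_L^*$ produce the same table set, as do $p_R,p_R^*$), one has $\mathbf{c}(\mathrm{Combine}(j,p_L^*,p_R^* ))\preceq_\alpha\mathbf{c}(\mathrm{Combine}(j,p_L,p_R))$. Procedure $\mathrm{Prune}(\mathcal{P},p_N,\alpha_i)$: if there is no $p\in\mathcal{P}$ with $\mathbf{c}(p)\preceq_{\alpha_i}\mathbf{c}(p_N)$, then delete from $\mathcal{P}$ every $p$ with $\mathbf{c}(p_N)\preceq\mathbf{c}(p)$ and then insert $p_N$; otherwise $\mathcal{P}$ is unchanged. RTA: for each table $t\in Q$, start with $\mathcal{P}^{\{t\}}=\emptyset$ and call $\mathrm{Prune}(\mathcal{P}^{\{t\}},p_N,\alpha_i)$ for every $p_N\in\mathcal{A}(\{t\})$; then for $k=2,\dots,|Q|$ and every $q\subseteq Q$ with $|q|=k$, start with $\mathcal{P}^q=\emptyset$ and, for every split $q=q_1\dot\cup q_2$ into nonempty parts, every $p_1\in\mathcal{P}^{q_1}$, $p_2\in\mathcal{P}^{q_2}$, $j\in\mathbb{J}$, call $\mathrm{Prune}(\mathcal{P}^q,\mathrm{Combine}(j,p_1,p_2),\alpha_i)$. An $\alpha$-approximate Pareto set for $q$ is a set of plans for $q$ containing, for every plan $p^*\in\mathcal{A}(q)$ (equivalently every Pareto-optimal one),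 a plan $p$ with $\mathbf{c}(p)\preceq_\alpha\mathbf{c}(p^* )$. *)

theory Defs
  imports Complex_Main
begin

text \<open>Cost vectors are functions from objectives to reals; only the
objectives in the (finite) objective set Obj matter.\<close>

definition approx_le :: "'o set \<Rightarrow> real \<Rightarrow> ('o \<Rightarrow> real) \<Rightarrow> ('o \<Rightarrow> real) \<Rightarrow> bool" where
  "approx_le Obj \<alpha> c1 c2 \<longleftrightarrow> (\<forall>ob\<in>Obj. c1 ob \<le> \<alpha> * c2 ob)"

definition dom_le :: "'o set \<Rightarrow> ('o \<Rightarrow> real) \<Rightarrow> ('o \<Rightarrow> real) \<Rightarrow> bool" where
  "dom_le Obj c1 c2 \<longleftrightarrow> (\<forall>ob\<in>Obj. c1 ob \<le> c2 ob)"

inductive is_plan :: "('a \<Rightarrow> 'p set) \<Rightarrow> 'j set \<Rightarrow> ('j \<Rightarrow> 'p \<Rightarrow> 'p \<Rightarrow> 'p)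
    \<Rightarrow> 'a set \<Rightarrow> 'p \<Rightarrow> bool"
  for Scan :: "'a \<Rightarrow> 'p set" and J :: "'j set" and Combine :: "'j \<Rightarrow> 'p \<Rightarrow> 'p \<Rightarrow> 'p"
  where
    scan: "p \<in> Scan t \<Longrightarrow> is_plan Scan J Combine {t} p"
  | combine: "\<lbrakk> q1 \<noteq> {}; q2 \<noteq> {}; q1 \<inter> q2 = {}; j \<in> J;
               is_plan Scan J Combine q1 p1; is_plan Scan J Combine q2 p2 \<rbrakk>
              \<Longrightarrow> is_plan Scan J Combine (q1 \<union> q2) (Combine j p1 p2)"

definition plans :: "('a \<Rightarrow> 'p set) \<Rightarrow> 'j set \<Rightarrow> ('j \<Rightarrow> 'p \<Rightarrow> 'p \<Rightarrow> 'p) \<Rightarrow> 'a set \<Rightarrow> 'p set" where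
  "plans Scan J Combine q = {p. is_plan Scan J Combine q p}"

definition PONO :: "('a \<Rightarrow> 'p set) \<Rightarrow> 'j set \<Rightarrow> ('j \<Rightarrow> 'p \<Rightarrow> 'p \<Rightarrow> 'p)
    \<Rightarrow> 'o set \<Rightarrow> ('p \<Rightarrow> 'o \<Rightarrow> real) \<Rightarrow> bool" where
  "PONO Scan J Combine Obj c \<longleftrightarrow>
    (\<forall>\<alpha> j qL qR pL pLs pR pRs. \<alpha> \<ge> 1 \<longrightarrow> j \<in> J \<longrightarrow>
       pL \<in> plans Scan J Combine qL \<longrightarrow> pLs \<in> plans Scan J Combine qL \<longrightarrow>
       pR \<in> plans Scan J Combine qR \<longrightarrow> pRs \<in> plans Scan J Combine qR \<longrightarrow>
       approx_le Obj \<alpha> (c pLs) (c pL) \<longrightarrow> approx_le Obj \<alpha> (c pRs) (c pR) \<longrightarrow>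
       approx_le Obj \<alpha> (c (Combine j pLs pRs)) (c (Combine j pL pR)))"

definition prune :: "'o set \<Rightarrow> ('p \<Rightarrow> 'o \<Rightarrow> real) \<Rightarrow> real \<Rightarrow> 'p set \<Rightarrow> 'p \<Rightarrow> 'p set" where
  "prune Obj c \<alpha> P pN =
     (if \<exists>p\<in>P. approx_le Obj \<alpha> (c p) (c pN) then P
      else insert pN (P - {p\<in>P. dom_le Obj (c pN) (c p)}))"

definition rta_candidates :: "'j set \<Rightarrow> ('a set \<Rightarrow> 'p set) \<Rightarrow> 'a set
    \<Rightarrow> ('a set \<times> 'a set \<times> 'j \<times> 'p \<times> 'p) set" where
  "rta_candidates J P q = {(q1, q2, j, p1, p2). q1 \<noteq> {} \<and> q2 \<noteq> {} \<and> q1 \<inter> q2 = {} \<and>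
      q1 \<union> q2 = q \<and> j \<in> J \<and> p1 \<in> P q1 \<and> p2 \<in> P q2}"

text \<open>P is a possible result of running RTA with precision \<alpha> on Q, for some
(arbitrary) enumeration order of the Prune calls.\<close>

definition rta_run :: "('a \<Rightarrow> 'p set) \<Rightarrow> 'j set \<Rightarrow> ('j \<Rightarrow> 'p \<Rightarrow> 'p \<Rightarrow> 'p)
    \<Rightarrow> 'o set \<Rightarrow> ('p \<Rightarrow> 'o \<Rightarrow> real) \<Rightarrow> real \<Rightarrow> 'a set \<Rightarrow> ('a set \<Rightarrow> 'p set) \<Rightarrow> bool" where
  "rta_run Scan J Combine Obj c \<alpha> Q P \<longleftrightarrow>
    (\<forall>t\<in>Q. \<exists>L. distinct L \<and> set L = Scan t \<and>
        P {t} = foldl (prune Obj c \<alpha>) {} L) \<and>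
    (\<forall>q. q \<subseteq> Q \<and> card q \<ge> 2 \<longrightarrow>
      (\<exists>L. distinct L \<and> set L = rta_candidates J P q \<and>
        P q = foldl (\<lambda>S (q1, q2, j, p1, p2). prune Obj c \<alpha> S (Combine j p1 p2)) {} L))"

definition approx_pareto_set :: "('a \<Rightarrow> 'p set) \<Rightarrow> 'j set \<Rightarrow> ('j \<Rightarrow> 'p \<Rightarrow> 'p \<Rightarrow> 'p)
    \<Rightarrow> 'o set \<Rightarrow> ('p \<Rightarrow> 'o \<Rightarrow> real) \<Rightarrow> real \<Rightarrow> 'a set \<Rightarrow> 'p set \<Rightarrow> bool" where
  "approx_pareto_set Scan J Combine Obj c \<alpha> q S \<longleftrightarrow>
    S \<subseteq> plans Scan J Combine q \<and>
    (\<forall>ps\<in>plans Scan J Combine q. \<exists>p\<in>S. approx_le Obj \<alpha> (c p) (c ps))"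

end

theory Submission
  imports Defs
begin

(* Call a set S of plans a
   \<beta>-cover of a cost vector v if some plan in S has cost within factor \<beta>
   of v.  Prune maintains two invariants: the newly offered plan is
   \<alpha>-covered afterwards, and every cost vector \<beta>-covered before remains
   \<beta>-covered (a discarded plan is dominated by the plan replacing it).
   Hence after a run of Prune calls every offered plan is \<alpha>-covered, and
   only offered plans are kept.  By induction over proper subsets of Q:
   the retained sets consist of genuine plans (soundness), and every plan
   for q is \<alpha>^|q|-covered by the retained set of q.  In the inductive step a
   plan Combine j p1 p2 splits q into q1, q2 with |qi| \<le> |q| - 1; replacing
   p1, p2 by retained \<alpha>^(|q|-1)-approximations yields, by PONO, a candidate
   that is an \<alpha>^(|q|-1)-approximation, and the candidate is itself
   \<alpha>-covered by the retained set of q, giving the factor \<alpha>^|q|. *)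

definition covers :: "'o set \<Rightarrow> ('p \<Rightarrow> 'o \<Rightarrow> real) \<Rightarrow> real \<Rightarrow> 'p set \<Rightarrow> ('o \<Rightarrow> real) \<Rightarrow> bool" where
  "covers Obj c \<beta> S v \<longleftrightarrow> (\<exists>p\<in>S. approx_le Obj \<beta> (c p) v)"

definition nonneg_costs :: "('a \<Rightarrow> 'p set) \<Rightarrow> 'j set \<Rightarrow> ('j \<Rightarrow> 'p \<Rightarrow> 'p \<Rightarrow> 'p)
    \<Rightarrow> 'o set \<Rightarrow> ('p \<Rightarrow> 'o \<Rightarrow> real) \<Rightarrow> bool" where
  "nonneg_costs Scan J Combine Obj c \<longleftrightarrow> (\<forall>q. \<forall>p\<in>plans Scan J Combine q. \<forall>ob\<in>Obj. c p ob \<ge> 0)"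

lemma nonneg_costsD:
  "nonneg_costs Scan J Combine Obj c \<Longrightarrow> p \<in> plans Scan J Combine q \<Longrightarrow> \<forall>ob\<in>Obj. c p ob \<ge> 0"
  unfolding nonneg_costs_def by blast

lemma approx_le_refl:
  assumes "\<alpha> \<ge> 1" and "\<forall>ob\<in>Obj. v ob \<ge> 0"
  shows "approx_le Obj \<alpha> v v"
  using assms unfolding approx_le_def by (metis mult_le_cancel_right1 order.strict_iff_not)

lemma dom_le_approx_le_trans:
  assumes "dom_le Obj u v" and "approx_le Obj \<beta> v w"
  shows "approx_le Obj \<beta> u w"
  using assms unfolding approx_le_def dom_le_def by (meson order_trans)

lemma approx_le_mono:
  assumes "approx_le Obj a u v" and "a \<le> b" and "\<forall>ob\<in>Obj. v ob \<ge> 0"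
  shows "approx_le Obj b u v"
  using assms unfolding approx_le_def by (meson mult_right_mono order_trans)

lemma approx_le_trans:
  assumes "approx_le Obj a u v" and "approx_le Obj b v w" and "a \<ge> 0"
  shows "approx_le Obj (a * b) u w"
  unfolding approx_le_def
proof
  fix ob assume ob: "ob \<in> Obj"
  have "u ob \<le> a * v ob" using assms(1) ob unfolding approx_le_def by blast
  also have "\<dots> \<le> a * (b * w ob)"
    using assms(2,3) ob unfolding approx_le_def by (simp add: mult_left_mono)
  finally show "u ob \<le> a * b * w ob" by (simp add: mult.assoc)
qed

lemma prune_subset: "prune Obj c \<alpha> S pN \<subseteq> insert pN S"
  by (auto simp: prune_def)

lemma prune_covers_new:
  assumes "\<alpha> \<ge> 1" and "\<forall>ob\<in>Obj. c pN ob \<ge> 0"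
  shows "covers Obj c \<alpha> (prune Obj c \<alpha> S pN) (c pN)"
  using approx_le_refl[OF assms] unfolding covers_def prune_def by auto

(* Prune never loses coverage: a discarded plan is dominated by the inserted one. *)
lemma prune_preserves_covers:
  assumes "covers Obj c \<beta> S v"
  shows "covers Obj c \<beta> (prune Obj c \<alpha> S pN) v"
proof -
  from assms obtain p where p: "p \<in> S" "approx_le Obj \<beta> (c p) v"
    unfolding covers_def by blast
  show ?thesis
  proof (cases "dom_le Obj (c pN) (c p)")
    case True
    then have "approx_le Obj \<beta> (c pN) v" using p(2) by (rule dom_le_approx_le_trans)
    then show ?thesis using p unfolding covers_def prune_def by auto
  next
    case False
    then show ?thesis using p unfolding covers_def prune_def by auto
  qed
qed

lemma foldl_prune_subset:
  "foldl (\<lambda>S x. prune Obj c \<alpha> S (f x)) S L \<subseteq> S \<union> f ` set L"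
proof (induction L arbitrary: S)
  case (Cons a L)
  have "foldl (\<lambda>S x. prune Obj c \<alpha> S (f x)) (prune Obj c \<alpha> S (f a)) L
          \<subseteq> prune Obj c \<alpha> S (f a) \<union> f ` set L" by (rule Cons.IH)
  then show ?case using prune_subset[of Obj c \<alpha> S "f a"] by auto
qed simp

lemma foldl_prune_preserves_covers:
  "covers Obj c \<beta> S v \<Longrightarrow> covers Obj c \<beta> (foldl (\<lambda>S x. prune Obj c \<alpha> S (f x)) S L) v"
  by (induction L arbitrary: S) (simp_all add: prune_preserves_covers)

lemma foldl_prune_covers:
  assumes "\<alpha> \<ge> 1" and "\<forall>y\<in>set L. \<forall>ob\<in>Obj. c (f y) ob \<ge> 0" and "x \<in> set L"
  shows "covers Obj c \<alpha> (foldl (\<lambda>S x. prune Obj c \<alpha> S (f x)) S L) (c (f x))"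
  using assms(2,3)
proof (induction L arbitrary: S)
  case (Cons a L)
  show ?case
  proof (cases "x \<in> set L")
    case True
    then show ?thesis using Cons by simp
  next
    case False
    then have "x = a" using Cons.prems(2) by simp
    have "covers Obj c \<alpha> (prune Obj c \<alpha> S (f a)) (c (f a))"
      using Cons.prems(1) by (simp add: prune_covers_new[OF assms(1)])
    then show ?thesis
      using \<open>x = a\<close> foldl_prune_preserves_covers by fastforce
  qed
qed simp

(* A plan for a singleton is a scan plan: a singleton admits no split. *)
lemma plan_singleton:
  assumes "p \<in> plans Scan J Combine {t}"
  shows "p \<in> Scan t"
proof -
  from assms have "is_plan Scan J Combine {t} p" by (simp add: plans_def)
  then show ?thesis
  proof cases
    case (combine q1 q2 j p1 p2)
    then show ?thesis by (metis Int_absorb Un_singleton_iff)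
  qed simp
qed

lemma plan_composite:
  assumes "p \<in> plans Scan J Combine q" and "card q \<ge> 2"
  obtains q1 q2 j p1 p2 where "p = Combine j p1 p2" "q1 \<noteq> {}" "q2 \<noteq> {}"
    "q1 \<inter> q2 = {}" "q1 \<union> q2 = q" "j \<in> J"
    "p1 \<in> plans Scan J Combine q1" "p2 \<in> plans Scan J Combine q2"
proof -
  from assms(1) have "is_plan Scan J Combine q p" by (simp add: plans_def)
  then show ?thesis
  proof cases
    case (scan t)
    then show ?thesis using assms(2) by simp
  next
    case (combine q1 q2 j p1 p2)
    then show ?thesis using that by (simp add: plans_def)
  qed
qed

definition candidate_plan :: "('j \<Rightarrow> 'p \<Rightarrow> 'p \<Rightarrow> 'p) \<Rightarrow> 'a set \<times> 'a set \<times> 'j \<times> 'p \<times> 'p \<Rightarrow> 'p" where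
  "candidate_plan Combine = (\<lambda>(q1, q2, j, p1, p2). Combine j p1 p2)"

lemma candidate_plan_in_plans:
  assumes "x \<in> rta_candidates J P q"
    and "\<And>q'. q' \<subset> q \<Longrightarrow> q' \<noteq> {} \<Longrightarrow> P q' \<subseteq> plans Scan J Combine q'"
  shows "candidate_plan Combine x \<in> plans Scan J Combine q"
proof -
  obtain q1 q2 j p1 p2 where x: "x = (q1, q2, j, p1, p2)" by (cases x)
  with assms(1) have
    split: "q1 \<noteq> {}" "q2 \<noteq> {}" "q1 \<inter> q2 = {}" "q1 \<union> q2 = q" "j \<in> J"
    and sub: "p1 \<in> P q1" "p2 \<in> P q2"
    by (simp_all add: rta_candidates_def)
  have "q1 \<subset> q" "q2 \<subset> q" using split by auto
  then have "is_plan Scan J Combine q1 p1" "is_plan Scan J Combine q2 p2"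
    using assms(2) split sub unfolding plans_def by blast+
  then have "is_plan Scan J Combine (q1 \<union> q2) (Combine j p1 p2)"
    by (rule is_plan.combine[OF split(1,2,3,5)])
  then show ?thesis using split(4) x unfolding candidate_plan_def plans_def by simp
qed

lemma singleton_if_card_less_2:
  assumes "finite q" and "q \<noteq> {}" and "\<not> card q \<ge> 2"
  obtains t where "q = {t}"
proof -
  have "card q > 0" using assms(1,2) by (simp add: card_gt_0_iff)
  then have "card q = 1" using assms(3) by linarith
  then show ?thesis using that card_1_singletonE by blast
qed

lemma rta_run_singleton:
  assumes "rta_run Scan J Combine Obj c \<alpha> Q P" and "t \<in> Q" and "\<alpha> \<ge> 1"
    and nonneg: "nonneg_costs Scan J Combine Obj c"
  shows "P {t} \<subseteq> Scan t" and "p \<in> Scan t \<Longrightarrow> covers Obj c \<alpha> (P {t}) (c p)"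
proof -
  obtain L where L: "set L = Scan t" "P {t} = foldl (\<lambda>S x. prune Obj c \<alpha> S x) {} L"
    using assms(1,2) unfolding rta_run_def by auto
  have "p \<in> plans Scan J Combine {t}" if "p \<in> Scan t" for p
    using that by (simp add: plans_def is_plan.scan)
  then have "\<forall>p\<in>set L. \<forall>ob\<in>Obj. c p ob \<ge> 0"
    using L(1) nonneg_costsD[OF nonneg] by blast
  then show "covers Obj c \<alpha> (P {t}) (c p)" if "p \<in> Scan t"
    using foldl_prune_covers[OF assms(3), where f="\<lambda>x. x" and L=L and x=p and S="{}"] L that
    by simp
  show "P {t} \<subseteq> Scan t"
    using foldl_prune_subset[where f="\<lambda>x. x" and S="{}" and L=L] L by simp
qed

lemma rta_run_composite:
  assumes "rta_run Scan J Combine Obj c \<alpha> Q P" and "q \<subseteq> Q" and "card q \<ge> 2"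
    and "\<alpha> \<ge> 1"
    and nonneg: "nonneg_costs Scan J Combine Obj c"
    and sound: "\<And>q'. q' \<subset> q \<Longrightarrow> q' \<noteq> {} \<Longrightarrow> P q' \<subseteq> plans Scan J Combine q'"
  shows "P q \<subseteq> candidate_plan Combine ` rta_candidates J P q"
    and "x \<in> rta_candidates J P q \<Longrightarrow> covers Obj c \<alpha> (P q) (c (candidate_plan Combine x))"
proof -
  have step: "(\<lambda>S (q1, q2, j, p1, p2). prune Obj c \<alpha> S (Combine j p1 p2))
      = (\<lambda>S x. prune Obj c \<alpha> S (candidate_plan Combine x))"
    by (auto simp: fun_eq_iff candidate_plan_def split: prod.splits)
  obtain L where L: "set L = rta_candidates J P q"
    "P q = foldl (\<lambda>S x. prune Obj c \<alpha> S (candidate_plan Combine x)) {} L"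
    using assms(1-3) unfolding rta_run_def step by blast
  have "\<forall>y\<in>set L. \<forall>ob\<in>Obj. c (candidate_plan Combine y) ob \<ge> 0"
    using L(1) candidate_plan_in_plans[OF _ sound] nonneg_costsD[OF nonneg] by blast
  then show "covers Obj c \<alpha> (P q) (c (candidate_plan Combine x))" if "x \<in> rta_candidates J P q"
    using foldl_prune_covers[OF assms(4), where f="candidate_plan Combine" and L=L and x=x and S="{}"]
      L that by simp
  show "P q \<subseteq> candidate_plan Combine ` rta_candidates J P q"
    using foldl_prune_subset[where f="candidate_plan Combine" and S="{}" and L=L] L by simp
qed

lemma rta_sound:
  assumes run: "rta_run Scan J Combine Obj c \<alpha> Q P" and "finite Q" and "\<alpha> \<ge> 1"
    and nonneg: "nonneg_costs Scan J Combine Obj c"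
    and "q \<subseteq> Q" and "q \<noteq> {}"
  shows "P q \<subseteq> plans Scan J Combine q"
proof -
  have "finite q" using assms(2,5) by (rule finite_subset[rotated])
  then show ?thesis using assms(5,6)
  proof (induction q rule: finite_psubset_induct)
    case (psubset q)
    have IH: "\<And>q'. q' \<subset> q \<Longrightarrow> q' \<noteq> {} \<Longrightarrow> P q' \<subseteq> plans Scan J Combine q'"
      using psubset by blast
    show ?case
    proof (cases "card q \<ge> 2")
      case True
      have "P q \<subseteq> candidate_plan Combine ` rta_candidates J P q"
        by (rule rta_run_composite(1)[OF run psubset.prems(1) True assms(3) nonneg IH])
      then show ?thesis using candidate_plan_in_plans[OF _ IH] by blast
    next
      case False
      obtain t where q: "q = {t}"
        using singleton_if_card_less_2[OF \<open>finite q\<close> psubset.prems(2) False] .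
      have "t \<in> Q" using psubset.prems(1) q by simp
      then have "P {t} \<subseteq> Scan t" by (rule rta_run_singleton(1)[OF run _ assms(3) nonneg])
      then show ?thesis unfolding q plans_def by (auto intro: is_plan.scan)
    qed
  qed
qed

(* PONO transfers the approximations of the two sub-plans to
   a candidate, which Prune covers within one further factor \<alpha>. *)
lemma rta_covers_composite:
  assumes run: "rta_run Scan J Combine Obj c \<alpha> Q P" and "finite Q" and a1: "\<alpha> \<ge> 1"
    and nonneg: "nonneg_costs Scan J Combine Obj c"
    and pono: "PONO Scan J Combine Obj c"
    and q: "q \<subseteq> Q" and big: "card q \<ge> 2"
    and IH: "\<And>q' p. q' \<subset> q \<Longrightarrow> q' \<noteq> {} \<Longrightarrow> p \<in> plans Scan J Combine q' \<Longrightarrow>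
               covers Obj c (\<alpha> ^ card q') (P q') (c p)"
    and ps: "ps \<in> plans Scan J Combine q"
  shows "covers Obj c (\<alpha> ^ card q) (P q) (c ps)"
proof -
  obtain q1 q2 j p1 p2 where ps_eq: "ps = Combine j p1 p2" and
    split: "q1 \<noteq> {}" "q2 \<noteq> {}" "q1 \<inter> q2 = {}" "q1 \<union> q2 = q" "j \<in> J" and
    pl: "p1 \<in> plans Scan J Combine q1" "p2 \<in> plans Scan J Combine q2"
    using plan_composite[OF ps big] .
  have fq: "finite q" using \<open>finite Q\<close> q by (rule finite_subset[rotated])
  have sound: "P q' \<subseteq> plans Scan J Combine q'" if "q' \<subset> q" "q' \<noteq> {}" for q'
    using rta_sound[OF run \<open>finite Q\<close> a1 nonneg] that q by blast
  define \<beta> where "\<beta> = \<alpha> ^ (card q - 1)"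
  have retained: "\<exists>p'\<in>P q'. approx_le Obj \<beta> (c p') (c p)"
    if q': "q' \<subset> q" "q' \<noteq> {}" "p \<in> plans Scan J Combine q'" for q' p
  proof -
    obtain p' where p': "p' \<in> P q'" "approx_le Obj (\<alpha> ^ card q') (c p') (c p)"
      using IH[OF q'] unfolding covers_def by blast
    have "\<alpha> ^ card q' \<le> \<beta>"
      unfolding \<beta>_def using a1 psubset_card_mono[OF fq q'(1)] by (intro power_increasing) auto
    with p' show ?thesis using approx_le_mono nonneg_costsD[OF nonneg q'(3)] by blast
  qed
  have parts: "q1 \<subset> q" "q2 \<subset> q" using split by auto
  obtain p1' p2' where p1': "p1' \<in> P q1" "approx_le Obj \<beta> (c p1') (c p1)"
    and p2': "p2' \<in> P q2" "approx_le Obj \<beta> (c p2') (c p2)"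
    using retained[OF parts(1) split(1) pl(1)] retained[OF parts(2) split(2) pl(2)] by blast
  have "\<beta> \<ge> 1" unfolding \<beta>_def using a1 by simp
  moreover have "p1' \<in> plans Scan J Combine q1" "p2' \<in> plans Scan J Combine q2"
    using sound[OF parts(1) split(1)] sound[OF parts(2) split(2)] p1'(1) p2'(1) by blast+
  ultimately have near: "approx_le Obj \<beta> (c (Combine j p1' p2')) (c ps)"
    using pono split(5) pl p1'(2) p2'(2) unfolding PONO_def ps_eq by simp
  have "(q1, q2, j, p1', p2') \<in> rta_candidates J P q"
    using split p1'(1) p2'(1) by (simp add: rta_candidates_def)
  from rta_run_composite(2)[OF run q big a1 nonneg sound this]
  obtain p where p: "p \<in> P q" "approx_le Obj \<alpha> (c p) (c (Combine j p1' p2'))"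
    unfolding covers_def candidate_plan_def by auto
  have "approx_le Obj (\<alpha> * \<beta>) (c p) (c ps)"
    using approx_le_trans[OF p(2) near] a1 by simp
  moreover have "\<alpha> * \<beta> = \<alpha> ^ card q"
    unfolding \<beta>_def using big by (simp add: power_eq_if)
  ultimately show ?thesis using p(1) unfolding covers_def by auto
qed

lemma rta_covers:
  assumes run: "rta_run Scan J Combine Obj c \<alpha> Q P" and "finite Q" and a1: "\<alpha> \<ge> 1"
    and nonneg: "nonneg_costs Scan J Combine Obj c"
    and pono: "PONO Scan J Combine Obj c"
    and "q \<subseteq> Q" and "q \<noteq> {}" and "ps \<in> plans Scan J Combine q"
  shows "covers Obj c (\<alpha> ^ card q) (P q) (c ps)"
proof -
  have "finite q" using assms(2,6) by (rule finite_subset[rotated])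
  then show ?thesis using assms(6-8)
  proof (induction q arbitrary: ps rule: finite_psubset_induct)
    case (psubset q)
    have IH: "\<And>q' p. q' \<subset> q \<Longrightarrow> q' \<noteq> {} \<Longrightarrow> p \<in> plans Scan J Combine q' \<Longrightarrow>
                covers Obj c (\<alpha> ^ card q') (P q') (c p)"
      using psubset.IH psubset.prems(1) by (meson order.trans psubset_imp_subset)
    show ?case
    proof (cases "card q \<ge> 2")
      case True
      show ?thesis
        by (rule rta_covers_composite[OF run \<open>finite Q\<close> a1 nonneg pono psubset.prems(1) True
              IH psubset.prems(3)])
    next
      case False
      obtain t where q: "q = {t}"
        using singleton_if_card_less_2[OF \<open>finite q\<close> psubset.prems(2) False] .
      have "ps \<in> Scan t" using psubset.prems(3) unfolding q by (rule plan_singleton)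
      moreover have "t \<in> Q" using psubset.prems(1) q by simp
      ultimately have "covers Obj c \<alpha> (P {t}) (c ps)"
        using rta_run_singleton(2)[OF run _ a1 nonneg] by blast
      then show ?thesis unfolding q by simp
    qed
  qed
qed

theorem theorem3:
  fixes Scan :: "'a \<Rightarrow> 'p set" and J :: "'j set" and Combine :: "'j \<Rightarrow> 'p \<Rightarrow> 'p \<Rightarrow> 'p"
    and Obj :: "'o set" and c :: "'p \<Rightarrow> 'o \<Rightarrow> real"
    and Q :: "'a set" and \<alpha> :: real and P :: "'a set \<Rightarrow> 'p set"
  assumes "finite Obj" and "Obj \<noteq> {}" and "finite J"
    and "\<And>t. finite (Scan t)" and "\<And>t. Scan t \<noteq> {}"
    and "\<And>q p ob. p \<in> plans Scan J Combine q \<Longrightarrow> ob \<in> Obj \<Longrightarrow> c p ob \<ge> 0"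
    and "PONO Scan J Combine Obj c"
    and "finite Q" and "Q \<noteq> {}" and "\<alpha> \<ge> 1"
    and "rta_run Scan J Combine Obj c \<alpha> Q P"
  shows "(\<forall>q. q \<subseteq> Q \<and> q \<noteq> {} \<longrightarrow>
            (\<forall>ps\<in>plans Scan J Combine q. \<exists>p\<in>P q. approx_le Obj (\<alpha> ^ card q) (c p) (c ps)))
       \<and> approx_pareto_set Scan J Combine Obj c (\<alpha> ^ card Q) Q (P Q)"
proof -
  have nonneg: "nonneg_costs Scan J Combine Obj c"
    using assms(6) unfolding nonneg_costs_def by blast
  have "\<forall>ps\<in>plans Scan J Combine q. \<exists>p\<in>P q. approx_le Obj (\<alpha> ^ card q) (c p) (c ps)"
    if "q \<subseteq> Q" "q \<noteq> {}" for q
    using rta_covers[OF assms(11,8,10) nonneg assms(7) that] unfolding covers_def by blast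
  moreover have "P Q \<subseteq> plans Scan J Combine Q"
    by (rule rta_sound[OF assms(11,8,10) nonneg order_refl assms(9)])
  ultimately show ?thesis
    using assms(9) unfolding approx_pareto_set_def by blast
qed

end
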